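(* Let $p\in[1,\infty)$, let $(\rho_t)_{t\in I}\subset L^1_{\rm loc}(\mathbb R^N)$ be non-negative, and let $J\subset I$ with $0\in\overline J$. Suppose there exists $C>0$ such that $\limsup_{t\in J,\,t\to0^+}\mathcal F_{t,p}(u)\le C\|\nabla u\|_{L^p}^p$ for every compactly supported Lipschitz function $u\colon\mathbb R^N\to\mathbb R$. Then $$\sup_{R>0}\ \limsup_{t\in J,\,t\to0^+}\ R^p\int_{\mathbb R^N}\frac{\rho_t(z)}{R^p+|z|^p}\,dz<\infty.$$
   Context: $I=(0,1)$; $\mathcal F_{t,p}(u)=\int\int\frac{|u(x)-u(y)|^p}{|x-y|^p}\rho_t(x-y)\,dx\,dy$ and $\|\nabla u\|^p_{L^p}=\int_{\mathbb R^N}|\nabla u|^pdx$. *)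

theory Defs
  imports "HOL-Analysis.Analysis"
begin

definition F_tp :: "('a::euclidean_space \<Rightarrow> real) \<Rightarrow> real \<Rightarrow> ('a \<Rightarrow> real) \<Rightarrow> ennreal" where
  "F_tp rho p u =
     (\<integral>\<^sup>+ x. (\<integral>\<^sup>+ y. ennreal (\<bar>u x - u y\<bar> powr p / norm (x - y) powr p * rho (x - y)) \<partial>lebesgue) \<partial>lebesgue)"

text \<open>The p-th power of the L^p norm of the gradient: integral of |grad u|^p, where the
  gradient is the (Frechet) derivative wherever u is differentiable (almost everywhere for
  Lipschitz u by Rademacher); its Euclidean norm equals the operator norm of the derivative.\<close>
definition grad_Lp_pow :: "('a::euclidean_space \<Rightarrow> real) \<Rightarrow> real \<Rightarrow> ennreal" where
  "grad_Lp_pow u p =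
     (\<integral>\<^sup>+ x. ennreal (if u differentiable (at x) then onorm (frechet_derivative u (at x)) powr p else 0) \<partial>lebesgue)"

definition locally_integrable :: "('a::euclidean_space \<Rightarrow> real) \<Rightarrow> bool" where
  "locally_integrable f \<longleftrightarrow> f \<in> borel_measurable lebesgue \<and>
     (\<forall>K. compact K \<longrightarrow> set_integrable lebesgue K f)"

definition compactly_supported_lipschitz :: "('a::euclidean_space \<Rightarrow> real) \<Rightarrow> bool" where
  "compactly_supported_lipschitz u \<longleftrightarrow>
     (\<exists>L. L-lipschitz_on UNIV u) \<and> (\<exists>K. compact K \<and> (\<forall>x. x \<notin> K \<longrightarrow> u x = 0))"

end

(*
  Test the hypothesis on the tent u_R(x) = max 0 (R - |x|): it is 1-Lipschitz and vanishes
  outside the closed R-ball, so its gradient term is at most |B_R| = omega_N R^N.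
  Conversely F_{t,p}(u_R) dominates R^p int rho_t(z) / (R^p + |z|^p) dz. Almost every z lies
  either in the far region |z| >= R/(4N), where |u_R(x) - u_R(x - z)| >= R/(8N) for all x close
  to 0, or in a cone |z| <= N |z . e_b| around a coordinate axis, where
  |u_R(x) - u_R(x - z)| >= |z|/(8N) for all x close to (3/8) R e_b. Integrating over these balls
  of x, of volume omega_N (R/(16N))^N, bounds the weighted integral by c(N,p) R^(-N) F_{t,p}(u_R),
  and the powers of R cancel against the gradient bound.
*)

theory Submission
  imports Defs
begin

lemma lipschitz_on_has_derivative_onorm_le:
  fixes f :: "'a::real_normed_vector \<Rightarrow> real"
  assumes lip: "L-lipschitz_on UNIV f" and D: "(f has_derivative D) (at x)"
  shows "onorm D \<le> L"
proof (rule onorm_bound)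
  show "0 \<le> L" using lipschitz_on_nonneg[OF lip] .
  fix h
  have "((\<lambda>s::real. x + s *\<^sub>R h) has_derivative (\<lambda>s. s *\<^sub>R h)) (at 0)"
    by (auto intro!: derivative_eq_intros)
  from has_derivative_compose[OF this] D
  have "((\<lambda>s. f (x + s *\<^sub>R h)) has_derivative (\<lambda>s. D (s *\<^sub>R h))) (at 0)" by simp
  then have "((\<lambda>s. f (x + s *\<^sub>R h)) has_field_derivative D h) (at 0)"
    by (rule has_derivative_imp_has_field_derivative)
       (simp add: linear.scaleR[OF has_derivative_linear[OF D]])
  then have "((\<lambda>s. \<bar>(f (x + s *\<^sub>R h) - f x) / s\<bar>) \<longlongrightarrow> \<bar>D h\<bar>) (at 0)"
    unfolding DERIV_def by (intro tendsto_rabs) simp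
  moreover have "\<bar>(f (x + s *\<^sub>R h) - f x) / s\<bar> \<le> L * norm h" for s
  proof -
    have "\<bar>f (x + s *\<^sub>R h) - f x\<bar> \<le> \<bar>s\<bar> * (L * norm h)"
      using lipschitz_onD[OF lip, of "x + s *\<^sub>R h" x] by (simp add: dist_norm dist_real_def mult_ac)
    then show ?thesis
      by (cases "s = 0") (auto simp: abs_divide divide_le_eq mult.commute lipschitz_on_nonneg[OF lip])
  qed
  ultimately show "norm (D h) \<le> L * norm h"
    by (intro tendsto_upperbound[of _ _ "at 0"]) (auto intro: always_eventually)
qed

lemma grad_Lp_pow_le_lipschitz:
  fixes u :: "'a::euclidean_space \<Rightarrow> real"
  assumes lip: "L-lipschitz_on UNIV u" and K: "closed K" and u0: "\<And>x. x \<notin> K \<Longrightarrow> u x = 0"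
    and p: "p \<ge> 0"
  shows "grad_Lp_pow u p \<le> ennreal (L powr p) * emeasure lebesgue K"
proof -
  have "ennreal (if u differentiable (at x) then onorm (frechet_derivative u (at x)) powr p else 0)
      \<le> ennreal (L powr p) * indicator K x" for x
  proof (cases "x \<in> K")
    case True
    have "onorm (frechet_derivative u (at x)) powr p \<le> L powr p" if "u differentiable (at x)"
    proof -
      have D: "(u has_derivative frechet_derivative u (at x)) (at x)"
        using that frechet_derivative_works by blast
      show ?thesis
        using lipschitz_on_has_derivative_onorm_le[OF lip D] p
        by (intro powr_mono2 onorm_pos_le has_derivative_bounded_linear[OF D])
    qed
    then show ?thesis using True by (simp add: ennreal_leI)
  next
    case False
    have "(u has_derivative (\<lambda>_. 0)) (at x)"
      by (rule has_derivative_transform_within_open[of "\<lambda>_. 0" _ _ _ "- K"])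
       (use False K u0 in \<open>auto simp: open_Compl\<close>)
    then have "frechet_derivative u (at x) = (\<lambda>_. 0)"
      by (metis frechet_derivative_at)
    then show ?thesis by (simp add: onorm_zero)
  qed
  then have "grad_Lp_pow u p \<le> (\<integral>\<^sup>+x. ennreal (L powr p) * indicator K x \<partial>lebesgue)"
    unfolding grad_Lp_pow_def by (intro nn_integral_mono)
  also have "\<dots> = ennreal (L powr p) * emeasure lebesgue K"
    using K by (intro nn_integral_cmult_indicator) (simp add: borel_closed)
  finally show ?thesis .
qed

definition tent :: "real \<Rightarrow> 'a::real_normed_vector \<Rightarrow> real" where
  "tent R x = max 0 (R - norm x)"

lemma lipschitz_tent: "1-lipschitz_on UNIV (tent R)"
proof (rule lipschitz_onI)
  fix x y :: 'a
  have "\<bar>norm x - norm y\<bar> \<le> norm (x - y)" by (rule norm_triangle_ineq3)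
  then show "dist (tent R x) (tent R y) \<le> 1 * dist x y"
    by (auto simp: tent_def dist_real_def dist_norm max_def)
qed simp

lemma tent_eq_0: "R \<le> norm x \<Longrightarrow> tent R x = 0"
  by (simp add: tent_def)

lemma tent_borel_measurable: "tent R \<in> borel_measurable borel"
  by (intro borel_measurable_continuous_onI lipschitz_on_continuous_on[OF lipschitz_tent])

lemma compactly_supported_lipschitz_tent:
  "compactly_supported_lipschitz (tent R :: 'a::euclidean_space \<Rightarrow> real)"
  unfolding compactly_supported_lipschitz_def
  using lipschitz_tent by (auto intro!: exI[of _ "cball 0 R"] tent_eq_0)

lemma grad_Lp_pow_tent_le:
  assumes "R \<ge> 0" "p \<ge> 0"
  shows "grad_Lp_pow (tent R :: 'a::euclidean_space \<Rightarrow> real) p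
    \<le> ennreal (unit_ball_vol DIM('a) * R ^ DIM('a))"
proof -
  have "grad_Lp_pow (tent R :: 'a \<Rightarrow> real) p
      \<le> ennreal (1 powr p) * emeasure lebesgue (cball (0::'a) R)"
    using assms by (intro grad_Lp_pow_le_lipschitz[OF lipschitz_tent]) (auto simp: tent_eq_0)
  then show ?thesis using assms by (simp add: emeasure_cball)
qed

lemma tent_diff_ge_far:
  fixes x z :: "'a::real_normed_vector"
  assumes n: "1 \<le> n" and R: "0 < R" and x: "norm x < R/(16*n)" and z: "R/(4*n) \<le> norm z"
  shows "R \<le> 8*n * \<bar>tent R x - tent R (x - z)\<bar>"
proof -
  define d where "d = R/(4*n)"
  have d: "0 < d" "d \<le> R/4" "norm x < d/4" "d \<le> norm z"
    using n R x z by (auto simp: d_def field_simps)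
  have "norm z - norm x \<le> norm (x - z)" by (metis norm_minus_commute norm_triangle_ineq2)
  with d have "d/2 \<le> \<bar>tent R x - tent R (x - z)\<bar>"
    by (auto simp: tent_def max_def)
  then have "8*n * (d/2) \<le> 8*n * \<bar>tent R x - tent R (x - z)\<bar>"
    using n by (intro mult_left_mono) auto
  then show ?thesis using n by (simp add: d_def)
qed

lemma abs_inner_ge_near_axis:
  fixes x z b :: "'a::real_inner"
  assumes x: "norm (x - s *\<^sub>R b) \<le> e" and zb: "(e + d) * norm z \<le> \<bar>s\<bar> * \<bar>z \<bullet> b\<bar>"
  shows "d * norm z \<le> \<bar>x \<bullet> z\<bar>"
proof -
  let ?w = "x - s *\<^sub>R b"
  have "\<bar>?w \<bullet> z\<bar> \<le> e * norm z"
    using Cauchy_Schwarz_ineq2[of ?w z] mult_right_mono[OF x norm_ge_zero[of z]] by linarith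
  moreover have "s * (z \<bullet> b) = x \<bullet> z - ?w \<bullet> z"
    by (simp add: inner_diff_left inner_commute[of b z])
  then have "\<bar>s\<bar> * \<bar>z \<bullet> b\<bar> \<le> \<bar>x \<bullet> z\<bar> + \<bar>?w \<bullet> z\<bar>"
    unfolding abs_mult[symmetric] by (simp only: abs_triangle_ineq4)
  moreover have "(e + d) * norm z = e * norm z + d * norm z"
    by (rule distrib_right)
  ultimately show ?thesis
    using zb by linarith
qed

lemma tent_diff_ge_near:
  fixes x z b :: "'a::real_inner"
  assumes n: "1 \<le> n" and b: "norm b = 1"
    and x: "norm (x - (3/8*R) *\<^sub>R b) < R/(8*n)"
    and z: "norm z < R/(4*n)" and zb: "norm z \<le> n * \<bar>z \<bullet> b\<bar>"
  shows "norm z \<le> 8*n * \<bar>tent R x - tent R (x - z)\<bar>"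
proof -
  have "0 < R/(4*n)" using z norm_ge_zero[of z] by linarith
  then have R: "0 < R" using n by (simp add: zero_less_divide_iff)
  define d where "d = R/(4*n)"
  have d: "0 < d" "d \<le> R/4" "norm z < d" "norm (x - (3/8*R) *\<^sub>R b) < d/2"
    using n z x R by (auto simp: d_def field_simps)
  have "(d/2 + d) * norm z = 3/8 * R * (norm z / n)" using n by (simp add: d_def)
  also have "\<dots> \<le> 3/8 * R * \<bar>z \<bullet> b\<bar>"
    using zb n R by (intro mult_left_mono) (auto simp: divide_le_eq mult.commute)
  also have "\<dots> = \<bar>3/8*R\<bar> * \<bar>z \<bullet> b\<bar>" using R by simp
  finally have "d * norm z \<le> \<bar>x \<bullet> z\<bar>"
    by (rule abs_inner_ge_near_axis[OF less_imp_le[OF d(4)]])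
  \<comment> \<open>Since the norm of z is below d, this separates the squared norms of x and x - z.\<close>
  moreover have "(norm x)\<^sup>2 - (norm (x - z))\<^sup>2 = 2 * (x \<bullet> z) - (norm z)\<^sup>2"
    by (simp add: power2_norm_eq_inner inner_diff inner_commute)
  moreover have "(norm z)\<^sup>2 \<le> d * norm z" "0 \<le> d * norm z"
    using d by (simp_all add: power2_eq_square mult_right_mono)
  ultimately have "d * norm z \<le> \<bar>(norm x)\<^sup>2 - (norm (x - z))\<^sup>2\<bar>"
    by (smt (verit) zero_le_power2)
  also have "(norm x)\<^sup>2 - (norm (x - z))\<^sup>2 = (norm x - norm (x - z)) * (norm x + norm (x - z))"
    by (simp add: power2_eq_square algebra_simps)
  also have "\<bar>\<dots>\<bar> = \<bar>norm x - norm (x - z)\<bar> * (norm x + norm (x - z))"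
    by (simp add: abs_mult)
  finally have sq: "d * norm z \<le> \<bar>norm x - norm (x - z)\<bar> * (norm x + norm (x - z))" .
  have "norm x \<le> R/2"
    using norm_triangle_ineq[of "(3/8*R) *\<^sub>R b" "x - (3/8*R) *\<^sub>R b"] b d R by simp
  moreover have "norm (x - z) \<le> norm x + norm z" by (rule norm_triangle_ineq4)
  ultimately have small: "norm x \<le> R/2" "norm (x - z) < R" "norm x + norm (x - z) \<le> 2 * R"
    using d by linarith+
  have "norm z = (4*n/R) * (d * norm z)" using n R by (simp add: d_def)
  also have "\<dots> \<le> (4*n/R) * (\<bar>norm x - norm (x - z)\<bar> * (2 * R))"
    using sq mult_left_mono[OF small(3) abs_ge_zero[of "norm x - norm (x - z)"]] n R
    by (intro mult_left_mono) auto
  also have "\<dots> = 8*n * \<bar>tent R x - tent R (x - z)\<bar>"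
    using small R by (simp add: tent_def abs_minus_commute)
  finally show ?thesis .
qed

lemma ex_Basis_inner_ge:
  fixes z :: "'a::euclidean_space"
  shows "\<exists>b\<in>Basis. norm z \<le> DIM('a) * \<bar>z \<bullet> b\<bar>"
proof (rule ccontr)
  assume "\<not> ?thesis"
  then have "\<bar>z \<bullet> b\<bar> < norm z / DIM('a)" if "b \<in> Basis" for b
    using that by (auto simp: field_simps)
  then have "(\<Sum>b\<in>Basis. \<bar>z \<bullet> b\<bar>) < (\<Sum>b\<in>(Basis::'a set). norm z / DIM('a))"
    by (intro sum_strict_mono) auto
  with norm_le_l1[of z] show False by simp
qed

lemma powr_weight_le:
  fixes R s a p :: real
  assumes R: "0 < R" and s: "0 < s" and p: "0 \<le> p" and a: "min R s \<le> a"
  shows "R powr p / (R powr p + s powr p) \<le> (a / s) powr p"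
proof (cases "s \<le> R")
  case True
  then have "1 \<le> a / s" using a s by simp
  then have "1 \<le> (a / s) powr p" using p by (simp add: ge_one_powr_ge_zero)
  moreover have "R powr p / (R powr p + s powr p) \<le> 1" using R by (simp add: add_pos_nonneg)
  ultimately show ?thesis by linarith
next
  case False
  have pos: "0 < R powr p" "0 < s powr p" using R s by simp_all
  then have "0 < (R powr p + s powr p) * s powr p" by (intro mult_pos_pos) linarith+
  with pos have "R powr p / (R powr p + s powr p) \<le> R powr p / s powr p"
    by (intro divide_left_mono) auto
  also have "\<dots> = (R / s) powr p" using R s by (simp add: powr_divide)
  also have "\<dots> \<le> (a / s) powr p" using False a R s p by (intro powr_mono2 divide_right_mono) auto
  finally show ?thesis .
qed

lemma nn_integral_lebesgue_reflect:
  fixes g :: "'a::euclidean_space \<Rightarrow> ennreal"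
  assumes g: "g \<in> borel_measurable lebesgue"
  shows "(\<integral>\<^sup>+y. g (x - y) \<partial>lebesgue) = (\<integral>\<^sup>+z. g z \<partial>lebesgue)"
proof -
  have reflect: "(\<lambda>z. x + (\<Sum>j\<in>Basis. (- 1 * (z \<bullet> j)) *\<^sub>R j)) = (\<lambda>z::'a. x - z)"
    by (simp add: sum_negf euclidean_representation)
  have M: "(\<lambda>z::'a. x - z) \<in> lebesgue \<rightarrow>\<^sub>M lebesgue"
    using lebesgue_affine_measurable[where c="\<lambda>_. -1" and t=x] unfolding reflect by simp
  have "lebesgue = distr lebesgue lebesgue (\<lambda>z::'a. x - z)"
    using lebesgue_affine_euclidean[where c="\<lambda>_. -1" and t=x] unfolding reflect
    by (simp add: density_1)
  then have "(\<integral>\<^sup>+z. g z \<partial>lebesgue) = (\<integral>\<^sup>+z. g z \<partial>distr lebesgue lebesgue (\<lambda>z::'a. x - z))"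
    by simp
  also have "\<dots> = (\<integral>\<^sup>+y. g (x - y) \<partial>lebesgue)"
    using g by (subst nn_integral_distr[OF M]) auto
  finally show ?thesis ..
qed

lemma emeasure_mult_le_nn_integral:
  assumes "B \<in> sets M" and "\<And>x. x \<in> B \<Longrightarrow> c \<le> f x"
  shows "emeasure M B * c \<le> (\<integral>\<^sup>+x. f x \<partial>M)"
proof -
  have "emeasure M B * c = (\<integral>\<^sup>+x. c * indicator B x \<partial>M)"
    using assms(1) by (simp add: nn_integral_cmult_indicator mult.commute)
  also have "\<dots> \<le> (\<integral>\<^sup>+x. f x \<partial>M)"
    using assms(2) by (intro nn_integral_mono) (simp split: split_indicator)
  finally show ?thesis .
qed

lemma F_tp_ge_emeasure_mult_nn_integral:
  fixes rho u :: "'a::euclidean_space \<Rightarrow> real"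
  assumes rho: "rho \<in> borel_measurable lebesgue" and u [measurable]: "u \<in> borel_measurable borel"
    and B: "B \<in> sets lebesgue"
    and w: "\<And>x z. x \<in> B \<Longrightarrow> w z \<le> ennreal (\<bar>u x - u (x - z)\<bar> powr p / norm z powr p * rho z)"
  shows "emeasure lebesgue B * (\<integral>\<^sup>+z. w z \<partial>lebesgue) \<le> F_tp rho p u"
  unfolding F_tp_def
proof (rule emeasure_mult_le_nn_integral[OF B])
  fix x assume x: "x \<in> B"
  define g where "g z = ennreal (\<bar>u x - u (x - z)\<bar> powr p / norm z powr p * rho z)" for z
  have "(\<lambda>z::'a. \<bar>u x - u (x - z)\<bar> powr p / norm z powr p) \<in> borel_measurable lborel"
    by measurable
  from borel_measurable_times[OF measurable_completion[OF this] rho]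
  have g: "g \<in> borel_measurable lebesgue"
    unfolding g_def by (rule measurable_compose[OF _ measurable_ennreal])
  have "(\<integral>\<^sup>+z. w z \<partial>lebesgue) \<le> (\<integral>\<^sup>+z. g z \<partial>lebesgue)"
    using w[OF x] by (intro nn_integral_mono) (simp add: g_def)
  also have "\<dots> = (\<integral>\<^sup>+y. g (x - y) \<partial>lebesgue)"
    using g by (rule nn_integral_lebesgue_reflect[symmetric])
  finally show "(\<integral>\<^sup>+z. w z \<partial>lebesgue)
      \<le> (\<integral>\<^sup>+y. ennreal (\<bar>u x - u y\<bar> powr p / norm (x - y) powr p * rho (x - y)) \<partial>lebesgue)"
    by (simp add: g_def)
qed

(* At z = 0 the difference quotient degenerates to 0 / 0 = 0, hence the hypothesis 0 \<notin> S. *)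
lemma F_tp_tent_ge_piece:
  fixes rho :: "'a::euclidean_space \<Rightarrow> real"
  assumes rho: "rho \<in> borel_measurable lebesgue" and rho_nonneg: "\<And>z. 0 \<le> rho z"
    and R: "0 < R" and p: "0 \<le> p" and m: "0 < m"
    and B: "B \<in> sets lebesgue" and S: "0 \<notin> S"
    and geom: "\<And>x z. x \<in> B \<Longrightarrow> z \<in> S \<Longrightarrow> min R (norm z) \<le> m * \<bar>tent R x - tent R (x - z)\<bar>"
  shows "emeasure lebesgue B
      * (\<integral>\<^sup>+z. ennreal (R powr p / (R powr p + norm z powr p) / m powr p * rho z) * indicator S z
          \<partial>lebesgue)
    \<le> F_tp rho p (tent R)"
proof (rule F_tp_ge_emeasure_mult_nn_integral[OF rho tent_borel_measurable B])
  fix x z :: 'a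
  assume x: "x \<in> B"
  let ?d = "\<bar>tent R x - tent R (x - z)\<bar>"
  show "ennreal (R powr p / (R powr p + norm z powr p) / m powr p * rho z) * indicator S z
      \<le> ennreal (?d powr p / norm z powr p * rho z)"
  proof (cases "z \<in> S")
    case True
    have "0 < norm z" using S True by auto
    then have "R powr p / (R powr p + norm z powr p) \<le> (m * ?d / norm z) powr p"
      using geom[OF x True] R p by (intro powr_weight_le) auto
    also have "\<dots> = m powr p * (?d powr p / norm z powr p)"
      using m by (simp add: powr_divide powr_mult)
    finally have "R powr p / (R powr p + norm z powr p) / m powr p \<le> ?d powr p / norm z powr p"
      using m by (simp only: pos_divide_le_eq[OF powr_gt_zero[THEN iffD2]] mult.commute)
    from mult_right_mono[OF this rho_nonneg[of z]] show ?thesis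
      using True by (simp add: ennreal_leI)
  qed simp
qed

lemma nn_integral_le_card_mult_of_cover:
  fixes w :: "'a \<Rightarrow> ennreal"
  assumes I: "finite I" and w: "w \<in> borel_measurable M" and S: "\<And>i. i \<in> I \<Longrightarrow> S i \<in> sets M"
    and cover: "AE x in M. \<exists>i\<in>I. x \<in> S i"
    and piece: "\<And>i. i \<in> I \<Longrightarrow> c * (\<integral>\<^sup>+x. w x * indicator (S i) x \<partial>M) \<le> F"
  shows "c * (\<integral>\<^sup>+x. w x \<partial>M) \<le> of_nat (card I) * F"
proof -
  have "AE x in M. w x \<le> (\<Sum>i\<in>I. w x * indicator (S i) x)"
    using cover
  proof eventually_elim
    case (elim x)
    then obtain i where i: "i \<in> I" "x \<in> S i" by blast
    then have "w x = w x * indicator (S i) x" by simp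
    also have "\<dots> \<le> (\<Sum>i\<in>I. w x * indicator (S i) x)"
      using i I by (intro member_le_sum) auto
    finally show ?case .
  qed
  then have "c * (\<integral>\<^sup>+x. w x \<partial>M) \<le> c * (\<integral>\<^sup>+x. (\<Sum>i\<in>I. w x * indicator (S i) x) \<partial>M)"
    by (intro mult_left_mono[OF _ zero_le] nn_integral_mono_AE)
  also have "\<dots> = (\<Sum>i\<in>I. c * (\<integral>\<^sup>+x. w x * indicator (S i) x \<partial>M))"
    using w S by (simp add: nn_integral_sum sum_distrib_left)
  also have "\<dots> \<le> (\<Sum>i\<in>I. F)"
    using piece by (rule sum_mono)
  finally show ?thesis by simp
qed

lemma ennreal_le_divide_mult_of_mult_le:
  assumes v: "0 < v" and a: "0 \<le> a" and le: "ennreal v * x \<le> ennreal a * y"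
  shows "x \<le> ennreal (a / v) * y"
proof -
  have "ennreal a = ennreal v * ennreal (a / v)"
    using v a by (simp add: ennreal_mult[symmetric])
  with le have "ennreal v * x \<le> ennreal v * (ennreal (a / v) * y)"
    by (simp add: mult.assoc)
  then show ?thesis
    using v by (simp add: ennreal_mult_le_mult_iff)
qed

lemma F_tp_tent_ge_weighted_integral:
  fixes rho :: "'a::euclidean_space \<Rightarrow> real"
  assumes rho: "rho \<in> borel_measurable lebesgue" and rho_nonneg: "\<And>z. 0 \<le> rho z"
    and R: "0 < R" and p: "0 \<le> p"
  shows "ennreal (unit_ball_vol DIM('a) * (R / (16 * DIM('a))) ^ DIM('a))
      * (\<integral>\<^sup>+z. ennreal (R powr p / (R powr p + norm z powr p) / (8 * DIM('a)) powr p * rho z)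
          \<partial>lebesgue)
    \<le> (1 + of_nat DIM('a)) * F_tp rho p (tent R)"
proof -
  define n where "n = real DIM('a)"
  have n: "1 \<le> n" by (simp add: n_def)
  define k where "k z = ennreal (R powr p / (R powr p + norm z powr p) / (8*n) powr p * rho z)"
    for z :: 'a
  have "(\<lambda>z::'a. R powr p / (R powr p + norm z powr p) / (8*n) powr p) \<in> borel_measurable lborel"
    by measurable
  from borel_measurable_times[OF measurable_completion[OF this] rho]
  have k: "k \<in> borel_measurable lebesgue"
    unfolding k_def[abs_def] by (rule measurable_compose[OF _ measurable_ennreal])
  \<comment> \<open>Piece None is the far region, tested on a ball around the origin; piece Some b is
    the cone around the axis b, tested on a ball around (3/8) R b.\<close>
  define I where "I = insert None (Some ` (Basis :: 'a set))"
  define S where "S i = (case i of None \<Rightarrow> {z::'a. R/(4*n) \<le> norm z}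
      | Some b \<Rightarrow> {z. z \<noteq> 0 \<and> norm z < R/(4*n) \<and> norm z \<le> n * \<bar>z \<bullet> b\<bar>})" for i
  define a where "a i = (case i of None \<Rightarrow> 0 | Some b \<Rightarrow> (3/8*R) *\<^sub>R (b::'a))" for i
  have "{z::'a. R/(4*n) \<le> norm z} \<in> sets lebesgue"
    by (intro sets_completionI_sets) measurable
  moreover have "{z::'a. z \<noteq> 0 \<and> norm z < R/(4*n) \<and> norm z \<le> n * \<bar>z \<bullet> b\<bar>} \<in> sets lebesgue"
    for b by (intro sets_completionI_sets) measurable
  ultimately have S_sets: "S i \<in> sets lebesgue" for i
    by (cases i) (simp_all add: S_def)
  have geom: "min R (norm z) \<le> 8*n * \<bar>tent R x - tent R (x - z)\<bar>"
    if "i \<in> I" "x \<in> ball (a i) (R/(16*n))" "z \<in> S i" for i x z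
  proof (cases i)
    case None
    with that n R have "R \<le> 8*n * \<bar>tent R x - tent R (x - z)\<bar>"
      by (intro tent_diff_ge_far) (auto simp: a_def S_def)
    then show ?thesis by linarith
  next
    case (Some b)
    with that n R have "norm (x - (3/8*R) *\<^sub>R b) < R/(8*n)"
      by (auto simp: a_def dist_norm norm_minus_commute field_simps)
    with Some that n have "norm z \<le> 8*n * \<bar>tent R x - tent R (x - z)\<bar>"
      by (intro tent_diff_ge_near) (auto simp: I_def S_def)
    then show ?thesis by linarith
  qed
  have pieces: "ennreal (unit_ball_vol n * (R / (16*n)) ^ DIM('a))
      * (\<integral>\<^sup>+z. k z * indicator (S i) z \<partial>lebesgue) \<le> F_tp rho p (tent R)"
    if "i \<in> I" for i
  proof -
    have "0 \<notin> S i" using R n by (cases i) (auto simp: S_def not_le)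
    with n have "emeasure lebesgue (ball (a i) (R/(16*n)))
        * (\<integral>\<^sup>+z. k z * indicator (S i) z \<partial>lebesgue) \<le> F_tp rho p (tent R)"
      unfolding k_def by (intro F_tp_tent_ge_piece[where B="ball (a i) (R/(16*n))" and m="8*n",
          OF rho rho_nonneg R p _ _ _ geom[OF that]]) simp_all
    moreover have "emeasure lebesgue (ball (a i) (R/(16*n)))
        = ennreal (unit_ball_vol n * (R / (16*n)) ^ DIM('a))"
      using R n by (simp add: n_def emeasure_ball mult.commute)
    ultimately show ?thesis by simp
  qed
  have cover: "AE z in lebesgue. \<exists>i\<in>I. z \<in> S i"
    using AE_completion[OF AE_lborel_singleton[of 0]]
  proof eventually_elim
    case (elim z)
    obtain b where "b \<in> Basis" "norm z \<le> n * \<bar>z \<bullet> b\<bar>"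
      using ex_Basis_inner_ge[of z] by (auto simp: n_def)
    with elim show ?case by (cases "R/(4*n) \<le> norm z") (force simp: I_def S_def)+
  qed
  have "finite I" by (simp add: I_def)
  from nn_integral_le_card_mult_of_cover[OF this k S_sets cover pieces]
  have "ennreal (unit_ball_vol n * (R / (16*n)) ^ DIM('a)) * (\<integral>\<^sup>+z. k z \<partial>lebesgue)
      \<le> of_nat (card I) * F_tp rho p (tent R)" .
  also have "card I = Suc DIM('a)"
    by (simp add: I_def card_image)
  finally show ?thesis
    by (simp add: k_def n_def)
qed

lemma weighted_integral_le_F_tp_tent:
  fixes rho :: "'a::euclidean_space \<Rightarrow> real"
  assumes rho: "rho \<in> borel_measurable lebesgue" and rho_nonneg: "\<And>z. 0 \<le> rho z"
    and R: "0 < R" and p: "0 \<le> p"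
  shows "ennreal (R powr p) * (\<integral>\<^sup>+z. ennreal (rho z / (R powr p + norm z powr p)) \<partial>lebesgue)
    \<le> ennreal ((1 + real DIM('a)) * (8 * real DIM('a)) powr p * (16 * real DIM('a)) ^ DIM('a)
         / (unit_ball_vol (real DIM('a)) * R ^ DIM('a))) * F_tp rho p (tent R)"
proof -
  define n where "n = real DIM('a)"
  have n: "1 \<le> n" by (simp add: n_def)
  define c where "c = (8*n) powr p"
  define v where "v = unit_ball_vol n * (R / (16*n)) ^ DIM('a)"
  have c: "0 < c" and v: "0 < v" using R n by (simp_all add: c_def v_def n_def)
  define k where "k z = ennreal (R powr p / (R powr p + norm z powr p) / c * rho z)" for z :: 'a
  have "(\<lambda>z::'a. R powr p / (R powr p + norm z powr p) / c) \<in> borel_measurable lborel"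
    by measurable
  from borel_measurable_times[OF measurable_completion[OF this] rho]
  have k: "k \<in> borel_measurable lebesgue"
    unfolding k_def[abs_def] by (rule measurable_compose[OF _ measurable_ennreal])
  have "ennreal (rho z / (R powr p + norm z powr p)) = ennreal (c / R powr p) * k z" for z
    using R c rho_nonneg[of z] by (simp add: k_def ennreal_mult[symmetric] add_pos_nonneg)
  then have "ennreal (R powr p) * (\<integral>\<^sup>+z. ennreal (rho z / (R powr p + norm z powr p)) \<partial>lebesgue)
      = ennreal c * (\<integral>\<^sup>+z. k z \<partial>lebesgue)"
    using R c k by (simp add: nn_integral_cmult mult.assoc[symmetric] ennreal_mult[symmetric])
  moreover have "ennreal v * (\<integral>\<^sup>+z. k z \<partial>lebesgue) \<le> ennreal (1 + n) * F_tp rho p (tent R)"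
    using F_tp_tent_ge_weighted_integral[OF rho rho_nonneg R p]
    by (simp add: k_def v_def c_def n_def ennreal_plus ennreal_of_nat_eq_real_of_nat)
  ultimately have "ennreal v * (ennreal (R powr p)
      * (\<integral>\<^sup>+z. ennreal (rho z / (R powr p + norm z powr p)) \<partial>lebesgue))
      \<le> ennreal (c * (1 + n)) * F_tp rho p (tent R)"
    using c n
    by (simp add: mult.left_commute[of "ennreal v"] mult_left_mono ennreal_mult mult.assoc)
  from ennreal_le_divide_mult_of_mult_le[OF v _ this]
  have "ennreal (R powr p) * (\<integral>\<^sup>+z. ennreal (rho z / (R powr p + norm z powr p)) \<partial>lebesgue)
      \<le> ennreal (c * (1 + n) / v) * F_tp rho p (tent R)"
    using c n by simp
  also have "c * (1 + n) / v
      = (1 + n) * (8 * n) powr p * (16 * n) ^ DIM('a) / (unit_ball_vol n * R ^ DIM('a))"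
    using n by (simp add: c_def v_def power_divide)
  finally show ?thesis by (simp add: n_def)
qed

lemma Limsup_le_ennreal_cmult:
  fixes f g :: "'a \<Rightarrow> ennreal"
  assumes "F \<noteq> bot" and "\<forall>\<^sub>F x in F. f x \<le> ennreal K * g x"
  shows "Limsup F f \<le> ennreal K * Limsup F g"
proof -
  have "Limsup F f \<le> Limsup F (\<lambda>x. ennreal K * g x)"
    using assms(2) by (rule Limsup_mono)
  also have "\<dots> = ennreal K * Limsup F g"
    by (rule Limsup_compose_continuous_mono[OF _ _ assms(1)])
       (auto intro: ennreal_continuous_on_cmult continuous_on_id simp: mono_def mult_left_mono)
  finally show ?thesis .
qed

lemma Limsup_weighted_integral_le:
  fixes rho :: "'b \<Rightarrow> 'a::euclidean_space \<Rightarrow> real"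
  assumes F: "F \<noteq> bot"
    and rho: "\<forall>\<^sub>F t in F. rho t \<in> borel_measurable lebesgue \<and> (\<forall>z. 0 \<le> rho t z)"
    and bound: "Limsup F (\<lambda>t. F_tp (rho t) p (tent R))
      \<le> ennreal C * grad_Lp_pow (tent R :: 'a \<Rightarrow> real) p"
    and R: "0 < R" and p: "0 \<le> p" and C: "0 \<le> C"
  shows "Limsup F
      (\<lambda>t. ennreal (R powr p) * (\<integral>\<^sup>+z. ennreal (rho t z / (R powr p + norm z powr p)) \<partial>lebesgue))
    \<le> ennreal ((1 + real DIM('a)) * (8 * real DIM('a)) powr p * (16 * real DIM('a)) ^ DIM('a) * C)"
proof -
  define D
    where "D = (1 + real DIM('a)) * (8 * real DIM('a)) powr p * (16 * real DIM('a)) ^ DIM('a)"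
  define V where "V = unit_ball_vol (real DIM('a)) * R ^ DIM('a)"
  have D: "0 \<le> D" by (simp add: D_def)
  have V: "0 < V" unfolding V_def using R by (intro mult_pos_pos unit_ball_vol_pos) auto
  have "Limsup F
      (\<lambda>t. ennreal (R powr p) * (\<integral>\<^sup>+z. ennreal (rho t z / (R powr p + norm z powr p)) \<partial>lebesgue))
    \<le> ennreal (D / V) * Limsup F (\<lambda>t. F_tp (rho t) p (tent R))"
  proof (rule Limsup_le_ennreal_cmult[OF F eventually_mono[OF rho]])
    fix t assume "rho t \<in> borel_measurable lebesgue \<and> (\<forall>z. 0 \<le> rho t z)"
    then show "ennreal (R powr p) * (\<integral>\<^sup>+z. ennreal (rho t z / (R powr p + norm z powr p)) \<partial>lebesgue)
        \<le> ennreal (D / V) * F_tp (rho t) p (tent R)"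
      using weighted_integral_le_F_tp_tent[OF _ _ R p] unfolding D_def V_def by blast
  qed
  also have "\<dots> \<le> ennreal (D / V) * (ennreal C * grad_Lp_pow (tent R :: 'a \<Rightarrow> real) p)"
    using bound by (rule mult_left_mono) simp
  also have "\<dots> \<le> ennreal (D / V) * (ennreal C * ennreal V)"
    using grad_Lp_pow_tent_le[OF less_imp_le[OF R] p] unfolding V_def
    by (intro mult_left_mono) auto
  also have "\<dots> = ennreal (D * C)"
    using V C D by (simp add: ennreal_mult[symmetric])
  finally show ?thesis by (simp add: D_def)
qed

theorem lemma2p11:
  fixes rho :: "real \<Rightarrow> 'a::euclidean_space \<Rightarrow> real"
    and p :: real and J :: "real set" and C :: real
  assumes p: "1 \<le> p"
    and rho_loc: "\<And>t. t \<in> {0<..<1} \<Longrightarrow> locally_integrable (rho t)"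
    and rho_nonneg: "\<And>t z. t \<in> {0<..<1} \<Longrightarrow> rho t z \<ge> 0"
    and J: "J \<subseteq> {0<..<1}" "0 \<in> closure J"
    and C: "C > 0"
    and bound: "\<And>u. compactly_supported_lipschitz u \<Longrightarrow>
        Limsup (at 0 within J) (\<lambda>t. F_tp (rho t) p u) \<le> ennreal C * grad_Lp_pow u p"
  shows "(SUP R\<in>{0<..}. Limsup (at 0 within J)
            (\<lambda>t. ennreal (R powr p) * (\<integral>\<^sup>+ z. ennreal (rho t z / (R powr p + norm z powr p)) \<partial>lebesgue)))
         < \<infinity>"
proof -
  have "0 islimpt J" using J by (auto simp: closure_def)
  then have J_nontrivial: "at 0 within J \<noteq> bot" by (simp add: trivial_limit_within)
  have "\<forall>\<^sub>F t in at 0 within J. t \<in> J" by (simp add: eventually_at_filter)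
  then have rho_J: "\<forall>\<^sub>F t in at 0 within J. rho t \<in> borel_measurable lebesgue \<and> (\<forall>z. 0 \<le> rho t z)"
    by (rule eventually_mono) (use J(1) rho_loc rho_nonneg in \<open>auto simp: locally_integrable_def\<close>)
  let ?M = "(1 + real DIM('a)) * (8 * real DIM('a)) powr p * (16 * real DIM('a)) ^ DIM('a) * C"
  have "(SUP R\<in>{0<..}. Limsup (at 0 within J)
      (\<lambda>t. ennreal (R powr p) * (\<integral>\<^sup>+ z. ennreal (rho t z / (R powr p + norm z powr p)) \<partial>lebesgue)))
    \<le> ennreal ?M"
  proof (rule SUP_least)
    fix R :: real assume "R \<in> {0<..}"
    then show "Limsup (at 0 within J)
        (\<lambda>t. ennreal (R powr p) * (\<integral>\<^sup>+ z. ennreal (rho t z / (R powr p + norm z powr p)) \<partial>lebesgue))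
      \<le> ennreal ?M"
      using bound[OF compactly_supported_lipschitz_tent] p C
      by (intro Limsup_weighted_integral_le[OF J_nontrivial rho_J]) auto
  qed
  also have "\<dots> < \<infinity>" by simp
  finally show ?thesis .
qed

end
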